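(* Let $G=(V,E)$ be a connected, locally finite graph, with arc set $A=\{(u,v):\{u,v\}\in E\}$. Let $m_V:V\to(0,\infty)$, $m_A:A\to(0,\infty)$ and $w:A\to\mathbb{C}$ be functions. Define $d$, $d^*$, $S$ and $U=S(2d^*d-1_A)$ as in the context. Suppose that one of the following two settings holds: (Setting 1) $\sum_{e\in A:\,o(e)=u}|w(e)|^2=1$ for all $u\in V$, and $m_V(u)=1$, $m_A(e)=1$ for all $u\in V$, $e\in A$; (Setting 2) $\sum_{e\in A:\,o(e)=u}w(e)=1$ for all $u\in V$, and $m_A(e)=m_V(o(e))\,w(e)=m_V(t(e))\,w(\bar e)$ for all $e\in A$. Then $U$ preserves the norm of $\ell^2(m_A;A)$: $\|U\psi\|_{m_A,A}=\|\psi\|_{m_A,A}$ for every $\psi\in\ell^2(m_A;A)$.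
   Context: For an arc $e=(u,v)\in A$, $o(e)=u$ is its origin, $t(e)=v$ its terminus, and $\bar e=(v,u)$ its inverse arc. $\ell^2(m_V;V)$ and $\ell^2(m_A;A)$ are the spaces of square-summable complex functions on $V$, resp. $A$, with inner products $\langle f_1,f_2\rangle_{m_V,V}=\sum_{u\in V}\overline{f_1(u)}f_2(u)m_V(u)$ and $\langle\psi_1,\psi_2\rangle_{m_A,A}=\sum_{e\in A}\overline{\psi_1(e)}\psi_2(e)m_A(e)$. The boundary operator is $(d\psi)(u)=\sum_{e\in A:\,t(e)=u}\overline{w(\bar e)}\,\psi(e)$, its adjoint (with respect to these inner products) is $(d^*f)(e)=f(t(e))\,m_V(t(e))\,w(\bar e)/m_A(e)$, the shift is $(S\psi)(e)=\psi(\bar e)$, and $1_A$ is the identity on functions on $A$. *)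

theory Defs
  imports "HOL-Analysis.Analysis"
begin

text \<open>A graph on vertex set V is given by a symmetric irreflexive edge relation E
  whose edges lie inside V. Arcs are ordered pairs (u,v) with E u v;
  o(e) = fst e, t(e) = snd e.\<close>

definition simple_graph :: "'a set \<Rightarrow> ('a \<Rightarrow> 'a \<Rightarrow> bool) \<Rightarrow> bool" where
  "simple_graph V E \<longleftrightarrow> (\<forall>u v. E u v \<longrightarrow> u \<in> V \<and> v \<in> V \<and> E v u \<and> u \<noteq> v)"

definition connected_graph :: "'a set \<Rightarrow> ('a \<Rightarrow> 'a \<Rightarrow> bool) \<Rightarrow> bool" where
  "connected_graph V E \<longleftrightarrow> V \<noteq> {} \<and> (\<forall>u\<in>V. \<forall>v\<in>V. (u, v) \<in> {(x, y). E x y}\<^sup>*)"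

definition locally_finite :: "'a set \<Rightarrow> ('a \<Rightarrow> 'a \<Rightarrow> bool) \<Rightarrow> bool" where
  "locally_finite V E \<longleftrightarrow> (\<forall>u\<in>V. finite {v. E u v})"

definition arcs :: "('a \<Rightarrow> 'a \<Rightarrow> bool) \<Rightarrow> ('a \<times> 'a) set" where
  "arcs E = {(u, v). E u v}"

definition rev_arc :: "'a \<times> 'a \<Rightarrow> 'a \<times> 'a" where
  "rev_arc e = (snd e, fst e)"

definition bd :: "('a \<Rightarrow> 'a \<Rightarrow> bool) \<Rightarrow> ('a \<times> 'a \<Rightarrow> complex) \<Rightarrow> ('a \<times> 'a \<Rightarrow> complex) \<Rightarrow> 'a \<Rightarrow> complex" where
  "bd E w \<psi> u = (\<Sum>e\<in>{e\<in>arcs E. snd e = u}. cnj (w (rev_arc e)) * \<psi> e)"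

definition bd_adj :: "('a \<Rightarrow> real) \<Rightarrow> ('a \<times> 'a \<Rightarrow> real) \<Rightarrow> ('a \<times> 'a \<Rightarrow> complex) \<Rightarrow> ('a \<Rightarrow> complex) \<Rightarrow> 'a \<times> 'a \<Rightarrow> complex" where
  "bd_adj mV mA w f e = f (snd e) * complex_of_real (mV (snd e)) * w (rev_arc e) / complex_of_real (mA e)"

definition shift :: "('a \<times> 'a \<Rightarrow> complex) \<Rightarrow> 'a \<times> 'a \<Rightarrow> complex" where
  "shift \<psi> e = \<psi> (rev_arc e)"

definition evolution :: "('a \<Rightarrow> 'a \<Rightarrow> bool) \<Rightarrow> ('a \<Rightarrow> real) \<Rightarrow> ('a \<times> 'a \<Rightarrow> real) \<Rightarrow> ('a \<times> 'a \<Rightarrow> complex) \<Rightarrow> ('a \<times> 'a \<Rightarrow> complex) \<Rightarrow> 'a \<times> 'a \<Rightarrow> complex" where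
  "evolution E mV mA w \<psi> = shift (\<lambda>e. 2 * bd_adj mV mA w (bd E w \<psi>) e - \<psi> e)"

definition in_l2 :: "('b \<Rightarrow> real) \<Rightarrow> 'b set \<Rightarrow> ('b \<Rightarrow> complex) \<Rightarrow> bool" where
  "in_l2 m X \<psi> \<longleftrightarrow> (\<lambda>e. (cmod (\<psi> e))\<^sup>2 * m e) summable_on X"

definition l2_norm :: "('b \<Rightarrow> real) \<Rightarrow> 'b set \<Rightarrow> ('b \<Rightarrow> complex) \<Rightarrow> real" where
  "l2_norm m X \<psi> = sqrt (\<Sum>\<^sub>\<infinity>e\<in>X. (cmod (\<psi> e))\<^sup>2 * m e)"

end

theory Submission
  imports Defs
begin

(*
  The arcs split into the finite blocks of arcs ending at a common vertex u, and d* d maps each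
  block to itself: on the block of u it is the m_A-orthogonal projection onto the line spanned by
  e \<mapsto> w(rev e) (Setting 1, where this vector has norm 1) or by the constant vector 1 (Setting 2,
  where its squared norm, the sum of m_A over the block, is m_V(u)). So 2 d* d - 1 is a reflection
  on every block and preserves the norm blockwise; as all terms are nonnegative, this carries over
  to the whole arc set. Finally S is an isometry because m_A(rev e) = m_A(e) in both settings.
*)

lemma of_real_cmod_power2: "(complex_of_real (cmod z))\<^sup>2 = z * cnj z"
  using complex_norm_square[of z] by simp

text \<open>For a weight vector \<open>a\<close> with \<open>N = \<parallel>a\<parallel>\<^sup>2\<close> and \<open>c = \<langle>a, \<psi>\<rangle> / N\<close>, the map
  \<open>\<psi> \<mapsto> 2 c a - \<psi>\<close> is the reflection in the line spanned by \<open>a\<close>.\<close>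

lemma sum_reflection_weighted_norm:
  fixes a \<psi> :: "'b \<Rightarrow> complex" and m :: "'b \<Rightarrow> real"
  assumes norm_a: "(\<Sum>e\<in>B. (cmod (a e))\<^sup>2 * m e) = N" and "N \<noteq> 0"
    and inner: "(\<Sum>e\<in>B. cnj (a e) * complex_of_real (m e) * \<psi> e) = c * complex_of_real N"
  shows "(\<Sum>e\<in>B. (cmod (2 * c * a e - \<psi> e))\<^sup>2 * m e) = (\<Sum>e\<in>B. (cmod (\<psi> e))\<^sup>2 * m e)"
proof -
  let ?m = "\<lambda>e. complex_of_real (m e)"
  have aa: "(\<Sum>e\<in>B. a e * cnj (a e) * ?m e) = complex_of_real N"
    using arg_cong[OF norm_a, of complex_of_real] by (simp add: of_real_cmod_power2)
  have a\<psi>: "(\<Sum>e\<in>B. a e * ?m e * cnj (\<psi> e)) = cnj c * complex_of_real N"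
    using arg_cong[OF inner, of cnj] by simp
  have "complex_of_real (\<Sum>e\<in>B. (cmod (2 * c * a e - \<psi> e))\<^sup>2 * m e)
      = (\<Sum>e\<in>B. 4 * (c * cnj c) * (a e * cnj (a e) * ?m e) - 2 * c * (a e * ?m e * cnj (\<psi> e))
                 - 2 * cnj c * (cnj (a e) * ?m e * \<psi> e) + \<psi> e * cnj (\<psi> e) * ?m e)"
    by (simp add: of_real_cmod_power2 algebra_simps)
  also have "\<dots> = 4 * (c * cnj c) * (\<Sum>e\<in>B. a e * cnj (a e) * ?m e)
      - 2 * c * (\<Sum>e\<in>B. a e * ?m e * cnj (\<psi> e)) - 2 * cnj c * (\<Sum>e\<in>B. cnj (a e) * ?m e * \<psi> e)
      + (\<Sum>e\<in>B. \<psi> e * cnj (\<psi> e) * ?m e)"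
    by (simp add: sum.distrib sum_subtractf sum_distrib_left)
  also have "\<dots> = (\<Sum>e\<in>B. \<psi> e * cnj (\<psi> e) * ?m e)"
    by (simp only: aa a\<psi> inner) (simp add: algebra_simps)
  also have "\<dots> = complex_of_real (\<Sum>e\<in>B. (cmod (\<psi> e))\<^sup>2 * m e)"
    by (simp add: of_real_cmod_power2)
  finally show ?thesis
    by (simp only: of_real_eq_iff)
qed

lemma has_sum_disjoint_Union_iff_Sigma:
  assumes "disjoint_family_on B A"
  shows "(f has_sum s) (\<Union>x\<in>A. B x) \<longleftrightarrow> ((f \<circ> snd) has_sum s) (Sigma A B)"
proof -
  have "(\<Union>x\<in>A. B x) = snd ` Sigma A B" by force
  moreover have "inj_on snd (Sigma A B)"
    using assms by (force simp: disjoint_family_on_def inj_on_def)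
  ultimately show ?thesis by (simp add: has_sum_reindex)
qed

lemma has_sum_disjoint_Union_blockwise_eq:
  fixes f g :: "'b \<Rightarrow> real"
  assumes disj: "disjoint_family_on B A"
    and fin: "\<And>x. x \<in> A \<Longrightarrow> finite (B x)"
    and block_eq: "\<And>x. x \<in> A \<Longrightarrow> sum g (B x) = sum f (B x)"
    and g_nonneg: "\<And>x y. x \<in> A \<Longrightarrow> y \<in> B x \<Longrightarrow> g y \<ge> 0"
    and f: "(f has_sum s) (\<Union>x\<in>A. B x)"
  shows "(g has_sum s) (\<Union>x\<in>A. B x)"
proof -
  have "((f \<circ> snd) has_sum s) (Sigma A B)"
    using f by (simp only: has_sum_disjoint_Union_iff_Sigma[OF disj])
  then have "((\<lambda>x. sum f (B x)) has_sum s) A"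
    by (rule has_sum_SigmaD) (simp add: fin)
  then have blocks: "((\<lambda>x. sum g (B x)) has_sum s) A"
    by (simp add: block_eq cong: has_sum_cong)
  have "g summable_on (\<Union>x\<in>A. B x)"
    by (rule summable_on_UnionI[OF _ has_sum_imp_summable[OF blocks] g_nonneg disj])
      (simp_all add: fin)
  then have "(g \<circ> snd) summable_on Sigma A B"
    by (simp only: summable_on_def has_sum_disjoint_Union_iff_Sigma[OF disj])
  then show ?thesis
    unfolding has_sum_disjoint_Union_iff_Sigma[OF disj]
    by (rule has_sum_SigmaI[OF _ blocks, rotated]) (simp add: fin)
qed

definition in_arcs :: "('a \<Rightarrow> 'a \<Rightarrow> bool) \<Rightarrow> 'a \<Rightarrow> ('a \<times> 'a) set" where
  "in_arcs E u = {e \<in> arcs E. snd e = u}"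

lemma rev_arc_rev_arc [simp]: "rev_arc (rev_arc e) = e"
  by (simp add: rev_arc_def)

lemma inj_rev_arc: "inj rev_arc"
  by (metis inj_onI rev_arc_rev_arc)

lemma mem_arcs_iff: "e \<in> arcs E \<longleftrightarrow> E (fst e) (snd e)"
  by (cases e) (simp add: arcs_def)

lemma rev_arc_mem_arcs:
  assumes "simple_graph V E" and "e \<in> arcs E"
  shows "rev_arc e \<in> arcs E"
  using assms by (simp add: simple_graph_def mem_arcs_iff rev_arc_def)

lemma bij_betw_rev_arc:
  assumes "simple_graph V E"
  shows "bij_betw rev_arc (arcs E) (arcs E)"
  by (rule bij_betwI[where g = rev_arc]) (auto simp: rev_arc_mem_arcs[OF assms])

lemma arcs_eq_Union_in_arcs:
  assumes "simple_graph V E"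
  shows "arcs E = (\<Union>u\<in>V. in_arcs E u)"
  using assms by (auto simp: simple_graph_def in_arcs_def mem_arcs_iff)

lemma in_arcs_subset: "in_arcs E u \<subseteq> arcs E"
  by (simp add: in_arcs_def)

lemma disjoint_family_in_arcs: "disjoint_family_on (in_arcs E) V"
  by (auto simp: disjoint_family_on_def in_arcs_def)

lemma finite_in_arcs:
  assumes "simple_graph V E" and "locally_finite V E" and "u \<in> V"
  shows "finite (in_arcs E u)"
proof -
  have "in_arcs E u \<subseteq> (\<lambda>v. (v, u)) ` {v. E u v}"
    using assms(1) by (force simp: simple_graph_def in_arcs_def mem_arcs_iff)
  moreover have "finite {v. E u v}"
    using assms(2,3) by (simp add: locally_finite_def)
  ultimately show ?thesis
    by (meson finite_imageI finite_subset)
qed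

lemma sum_out_arcs_eq_sum_in_arcs:
  assumes "simple_graph V E"
  shows "(\<Sum>e\<in>{e \<in> arcs E. fst e = u}. f e) = (\<Sum>e\<in>in_arcs E u. f (rev_arc e))"
proof -
  have "{e \<in> arcs E. fst e = u} = rev_arc ` in_arcs E u"
    using rev_arc_mem_arcs[OF assms] rev_arc_rev_arc
    by (auto simp: in_arcs_def rev_arc_def image_iff)
  then show ?thesis
    by (simp add: sum.reindex[OF inj_on_subset[OF inj_rev_arc]])
qed

definition coin :: "('a \<Rightarrow> 'a \<Rightarrow> bool) \<Rightarrow> ('a \<Rightarrow> real) \<Rightarrow> ('a \<times> 'a \<Rightarrow> real) \<Rightarrow> ('a \<times> 'a \<Rightarrow> complex)
    \<Rightarrow> ('a \<times> 'a \<Rightarrow> complex) \<Rightarrow> 'a \<times> 'a \<Rightarrow> complex" where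
  "coin E mV mA w \<psi> e = 2 * bd_adj mV mA w (bd E w \<psi>) e - \<psi> e"

lemma evolution_eq_shift_coin: "evolution E mV mA w \<psi> = shift (coin E mV mA w \<psi>)"
  by (simp add: evolution_def coin_def[abs_def])

lemma bd_eq_sum_in_arcs: "bd E w \<psi> u = (\<Sum>e\<in>in_arcs E u. cnj (w (rev_arc e)) * \<psi> e)"
  by (simp add: bd_def in_arcs_def)

lemma coin_in_arcs:
  assumes "e \<in> in_arcs E u"
  shows "coin E mV mA w \<psi> e
    = 2 * (bd E w \<psi> u * complex_of_real (mV u) * w (rev_arc e) / complex_of_real (mA e)) - \<psi> e"
  using assms by (simp add: coin_def bd_adj_def in_arcs_def)

lemma coin_block_norm_unitary:
  assumes graph: "simple_graph V E"
    and w_unit: "(\<Sum>e\<in>{e \<in> arcs E. fst e = u}. (cmod (w e))\<^sup>2) = 1"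
    and "mV u = 1" and mA_one: "\<forall>e\<in>in_arcs E u. mA e = 1"
  shows "(\<Sum>e\<in>in_arcs E u. (cmod (coin E mV mA w \<psi> e))\<^sup>2 * mA e)
       = (\<Sum>e\<in>in_arcs E u. (cmod (\<psi> e))\<^sup>2 * mA e)"
proof -
  let ?c = "bd E w \<psi> u" and ?a = "\<lambda>e. w (rev_arc e)"
  have "(\<Sum>e\<in>in_arcs E u. (cmod (coin E mV mA w \<psi> e))\<^sup>2 * mA e)
      = (\<Sum>e\<in>in_arcs E u. (cmod (2 * ?c * ?a e - \<psi> e))\<^sup>2 * mA e)"
    using assms(3) mA_one by (intro sum.cong) (simp_all add: coin_in_arcs mult.assoc)
  also have "\<dots> = (\<Sum>e\<in>in_arcs E u. (cmod (\<psi> e))\<^sup>2 * mA e)"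
  proof (rule sum_reflection_weighted_norm)
    show "(\<Sum>e\<in>in_arcs E u. (cmod (?a e))\<^sup>2 * mA e) = 1"
      using w_unit mA_one by (simp add: sum_out_arcs_eq_sum_in_arcs[OF graph])
    show "(\<Sum>e\<in>in_arcs E u. cnj (?a e) * complex_of_real (mA e) * \<psi> e) = ?c * complex_of_real 1"
      using mA_one by (simp add: bd_eq_sum_in_arcs)
  qed simp
  finally show ?thesis .
qed

lemma coin_block_norm_reversible:
  assumes graph: "simple_graph V E" and "mV u > 0"
    and w_stochastic: "(\<Sum>e\<in>{e \<in> arcs E. fst e = u}. w e) = 1"
    and balance: "\<forall>e\<in>in_arcs E u. complex_of_real (mA e) = complex_of_real (mV u) * w (rev_arc e)"
    and mA_pos: "\<forall>e\<in>in_arcs E u. mA e > 0"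
  shows "(\<Sum>e\<in>in_arcs E u. (cmod (coin E mV mA w \<psi> e))\<^sup>2 * mA e)
       = (\<Sum>e\<in>in_arcs E u. (cmod (\<psi> e))\<^sup>2 * mA e)"
proof -
  let ?c = "bd E w \<psi> u"
  have "(\<Sum>e\<in>in_arcs E u. (cmod (coin E mV mA w \<psi> e))\<^sup>2 * mA e)
      = (\<Sum>e\<in>in_arcs E u. (cmod (2 * ?c * 1 - \<psi> e))\<^sup>2 * mA e)"
  proof (intro sum.cong refl)
    fix e assume e: "e \<in> in_arcs E u"
    have "complex_of_real (mV u) * w (rev_arc e) = complex_of_real (mA e)"
      using balance e by simp
    moreover have "mA e > 0"
      using mA_pos e by blast
    ultimately have "?c * complex_of_real (mV u) * w (rev_arc e) / complex_of_real (mA e) = ?c"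
      by (simp add: mult.assoc)
    then show "(cmod (coin E mV mA w \<psi> e))\<^sup>2 * mA e = (cmod (2 * ?c * 1 - \<psi> e))\<^sup>2 * mA e"
      using e by (simp add: coin_in_arcs)
  qed
  also have "\<dots> = (\<Sum>e\<in>in_arcs E u. (cmod (\<psi> e))\<^sup>2 * mA e)"
  proof (rule sum_reflection_weighted_norm)
    have "complex_of_real (\<Sum>e\<in>in_arcs E u. mA e)
        = complex_of_real (mV u) * (\<Sum>e\<in>{e \<in> arcs E. fst e = u}. w e)"
      using balance by (simp add: sum_out_arcs_eq_sum_in_arcs[OF graph] sum_distrib_left)
    then have "(\<Sum>e\<in>in_arcs E u. mA e) = mV u"
      using w_stochastic by (simp only: mult_1_right of_real_eq_iff)
    then show "(\<Sum>e\<in>in_arcs E u. (cmod 1)\<^sup>2 * mA e) = mV u"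
      by simp
    have "(\<Sum>e\<in>in_arcs E u. cnj 1 * complex_of_real (mA e) * \<psi> e)
        = (\<Sum>e\<in>in_arcs E u. cnj (w (rev_arc e)) * \<psi> e * complex_of_real (mV u))"
    proof (intro sum.cong refl)
      fix e assume "e \<in> in_arcs E u"
      then have "complex_of_real (mA e) = complex_of_real (mV u) * cnj (w (rev_arc e))"
        using arg_cong[OF bspec[OF balance], of e cnj] by simp
      then show "cnj 1 * complex_of_real (mA e) * \<psi> e = cnj (w (rev_arc e)) * \<psi> e * complex_of_real (mV u)"
        by simp
    qed
    then show "(\<Sum>e\<in>in_arcs E u. cnj 1 * complex_of_real (mA e) * \<psi> e) = ?c * complex_of_real (mV u)"
      by (simp add: bd_eq_sum_in_arcs sum_distrib_right)
  qed (use assms(2) in simp)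
  finally show ?thesis .
qed

lemma arc_weight_symmetric_if_balanced:
  assumes graph: "simple_graph V E" and "e \<in> arcs E"
    and balance: "\<forall>e\<in>arcs E. complex_of_real (mA e) = complex_of_real (mV (fst e)) * w e
                        \<and> complex_of_real (mA e) = complex_of_real (mV (snd e)) * w (rev_arc e)"
  shows "mA (rev_arc e) = mA e"
proof -
  have "complex_of_real (mA (rev_arc e)) = complex_of_real (mV (snd e)) * w (rev_arc e)"
    using conjunct1[OF bspec[OF balance rev_arc_mem_arcs[OF graph assms(2)]]]
    by (simp add: rev_arc_def)
  also have "\<dots> = complex_of_real (mA e)"
    using conjunct2[OF bspec[OF balance assms(2)]] by simp
  finally have "complex_of_real (mA (rev_arc e)) = complex_of_real (mA e)" .
  then show ?thesis by simp
qed

lemma has_sum_shift_norm_iff: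
  assumes "bij_betw rev_arc A A" and "\<And>e. e \<in> A \<Longrightarrow> m (rev_arc e) = m e"
  shows "((\<lambda>e. (cmod (shift \<phi> e))\<^sup>2 * m e) has_sum s) A \<longleftrightarrow> ((\<lambda>e. (cmod (\<phi> e))\<^sup>2 * m e) has_sum s) A"
proof -
  have "((\<lambda>e. (cmod (shift \<phi> e))\<^sup>2 * m e) has_sum s) A
      \<longleftrightarrow> ((\<lambda>e. (cmod (\<phi> (rev_arc e)))\<^sup>2 * m (rev_arc e)) has_sum s) A"
    using assms(2) by (intro has_sum_cong) (simp add: shift_def)
  also have "\<dots> \<longleftrightarrow> ((\<lambda>e. (cmod (\<phi> e))\<^sup>2 * m e) has_sum s) A"
    by (rule has_sum_reindex_bij_betw[OF assms(1), where f = "\<lambda>e. (cmod (\<phi> e))\<^sup>2 * m e"])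
  finally show ?thesis .
qed

lemma has_sum_evolution_norm:
  assumes graph: "simple_graph V E" and lf: "locally_finite V E"
    and mA_pos: "\<forall>e\<in>arcs E. mA e > 0"
    and mA_sym: "\<forall>e\<in>arcs E. mA (rev_arc e) = mA e"
    and blocks: "\<forall>u\<in>V. (\<Sum>e\<in>in_arcs E u. (cmod (coin E mV mA w \<psi> e))\<^sup>2 * mA e)
                      = (\<Sum>e\<in>in_arcs E u. (cmod (\<psi> e))\<^sup>2 * mA e)"
    and \<psi>: "((\<lambda>e. (cmod (\<psi> e))\<^sup>2 * mA e) has_sum s) (arcs E)"
  shows "((\<lambda>e. (cmod (evolution E mV mA w \<psi> e))\<^sup>2 * mA e) has_sum s) (arcs E)"
proof -
  have arcs: "arcs E = (\<Union>u\<in>V. in_arcs E u)"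
    by (rule arcs_eq_Union_in_arcs[OF graph])
  have "((\<lambda>e. (cmod (coin E mV mA w \<psi> e))\<^sup>2 * mA e) has_sum s) (\<Union>u\<in>V. in_arcs E u)"
  proof (rule has_sum_disjoint_Union_blockwise_eq[OF disjoint_family_in_arcs finite_in_arcs[OF graph lf]])
    show "((\<lambda>e. (cmod (\<psi> e))\<^sup>2 * mA e) has_sum s) (\<Union>u\<in>V. in_arcs E u)"
      using \<psi> by (simp only: arcs)
    show "0 \<le> (cmod (coin E mV mA w \<psi> e))\<^sup>2 * mA e" if "e \<in> in_arcs E u" for u e
      using mA_pos subsetD[OF in_arcs_subset that] by (intro mult_nonneg_nonneg) auto
  qed (use blocks in blast)+
  then have "((\<lambda>e. (cmod (coin E mV mA w \<psi> e))\<^sup>2 * mA e) has_sum s) (arcs E)"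
    by (simp only: arcs)
  then show ?thesis
    unfolding evolution_eq_shift_coin
    by (subst has_sum_shift_norm_iff[OF bij_betw_rev_arc[OF graph]]) (simp_all add: mA_sym)
qed

theorem proposition1:
  fixes V :: "'a set" and E :: "'a \<Rightarrow> 'a \<Rightarrow> bool"
    and mV :: "'a \<Rightarrow> real" and mA :: "'a \<times> 'a \<Rightarrow> real"
    and w :: "'a \<times> 'a \<Rightarrow> complex" and \<psi> :: "'a \<times> 'a \<Rightarrow> complex"
  assumes graph: "simple_graph V E"
    and conn: "connected_graph V E"
    and lf: "locally_finite V E"
    and mV_pos: "\<forall>u\<in>V. mV u > 0"
    and mA_pos: "\<forall>e\<in>arcs E. mA e > 0"
    and setting:
      "((\<forall>u\<in>V. (\<Sum>e\<in>{e\<in>arcs E. fst e = u}. (cmod (w e))\<^sup>2) = 1)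
          \<and> (\<forall>u\<in>V. mV u = 1) \<and> (\<forall>e\<in>arcs E. mA e = 1))
       \<or> ((\<forall>u\<in>V. (\<Sum>e\<in>{e\<in>arcs E. fst e = u}. w e) = 1)
          \<and> (\<forall>e\<in>arcs E. complex_of_real (mA e) = complex_of_real (mV (fst e)) * w e
                        \<and> complex_of_real (mA e) = complex_of_real (mV (snd e)) * w (rev_arc e)))"
    and psi: "in_l2 mA (arcs E) \<psi>"
  shows "in_l2 mA (arcs E) (evolution E mV mA w \<psi>)
    \<and> l2_norm mA (arcs E) (evolution E mV mA w \<psi>) = l2_norm mA (arcs E) \<psi>"
proof -
  have "(\<forall>e\<in>arcs E. mA (rev_arc e) = mA e)
      \<and> (\<forall>u\<in>V. (\<Sum>e\<in>in_arcs E u. (cmod (coin E mV mA w \<psi> e))\<^sup>2 * mA e)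
                = (\<Sum>e\<in>in_arcs E u. (cmod (\<psi> e))\<^sup>2 * mA e))"
    using setting
  proof (elim disjE conjE)
    assume "\<forall>u\<in>V. (\<Sum>e\<in>{e\<in>arcs E. fst e = u}. (cmod (w e))\<^sup>2) = 1"
      and "\<forall>u\<in>V. mV u = 1" and "\<forall>e\<in>arcs E. mA e = 1"
    then show ?thesis
      using rev_arc_mem_arcs[OF graph]
      by (intro conjI ballI coin_block_norm_unitary[OF graph]) (auto simp: in_arcs_def)
  next
    assume "\<forall>u\<in>V. (\<Sum>e\<in>{e\<in>arcs E. fst e = u}. w e) = 1"
      and balance: "\<forall>e\<in>arcs E. complex_of_real (mA e) = complex_of_real (mV (fst e)) * w e
                        \<and> complex_of_real (mA e) = complex_of_real (mV (snd e)) * w (rev_arc e)"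
    then show ?thesis
      using mV_pos mA_pos arc_weight_symmetric_if_balanced[OF graph _ balance]
      by (intro conjI ballI coin_block_norm_reversible[OF graph]) (auto simp: in_arcs_def)
  qed
  moreover have "((\<lambda>e. (cmod (\<psi> e))\<^sup>2 * mA e) has_sum (\<Sum>\<^sub>\<infinity>e\<in>arcs E. (cmod (\<psi> e))\<^sup>2 * mA e)) (arcs E)"
    using psi by (simp add: in_l2_def)
  ultimately have "((\<lambda>e. (cmod (evolution E mV mA w \<psi> e))\<^sup>2 * mA e)
      has_sum (\<Sum>\<^sub>\<infinity>e\<in>arcs E. (cmod (\<psi> e))\<^sup>2 * mA e)) (arcs E)"
    by (elim conjE has_sum_evolution_norm[OF graph lf mA_pos])
  then show ?thesis
    unfolding has_sum_iff in_l2_def l2_norm_def by simp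
qed

end
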